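(* Let $\Lambda_1,\Lambda_2\in\mathcal{M}_2$. If $\widehat{\Lambda_1}$ or $\widehat{\Lambda_2}$ is differentiable, then $\widehat{\Lambda_1*\Lambda_2}$ is differentiable.
   Context: $\mathcal{M}_2$ is the set of bivariate tail dependence functions $\Lambda(\mathbf{w})=\lim_{s\searrow0}C(s\mathbf{w})/s$, $\mathbf{w}\in\mathbb{R}_+^2$ ($\mathbb{R}_+=[0,\infty)$), of $2$-copulas $C$; they are concave, $1$-Lipschitz and positively homogeneous of order $1$. For $\Lambda\in\mathcal{M}_2$ write $\widehat{\Lambda}(t):=\Lambda(t,1-t)$ for $t\in[0,1]$. The Markov product of $\Lambda_1,\Lambda_2\in\mathcal{M}_2$ is $(\Lambda_1*\Lambda_2)(w_1,w_2):=\int_0^\infty\partial_2\Lambda_1(w_1,t)\,\partial_1\Lambda_2(t,w_2)\,dt$, again an element of $\mathcal{M}_2$. *)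

theory Defs
  imports "HOL-Analysis.Analysis"
begin

definition copula2 :: "(real \<Rightarrow> real \<Rightarrow> real) \<Rightarrow> bool" where
  "copula2 C \<longleftrightarrow>
     (\<forall>u\<in>{0..1}. C u 0 = 0 \<and> C 0 u = 0 \<and> C u 1 = u \<and> C 1 u = u) \<and>
     (\<forall>u1\<in>{0..1}. \<forall>u2\<in>{0..1}. \<forall>v1\<in>{0..1}. \<forall>v2\<in>{0..1}.
        u1 \<le> u2 \<longrightarrow> v1 \<le> v2 \<longrightarrow> C u2 v2 - C u2 v1 - C u1 v2 + C u1 v1 \<ge> 0)"

text \<open>M_2: tail dependence functions Lambda(w) = lim_{s -> 0+} C(s w)/s on R_+^2
  of 2-copulas C (values outside R_+^2 are irrelevant).\<close>
definition M2 :: "(real \<Rightarrow> real \<Rightarrow> real) set" where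
  "M2 = {L. \<exists>C. copula2 C \<and>
           (\<forall>w1\<ge>0. \<forall>w2\<ge>0. ((\<lambda>s. C (s * w1) (s * w2) / s) \<longlongrightarrow> L w1 w2) (at_right 0))}"

definition hat :: "(real \<Rightarrow> real \<Rightarrow> real) \<Rightarrow> real \<Rightarrow> real" where
  "hat L t = L t (1 - t)"

definition markov_prod ::
  "(real \<Rightarrow> real \<Rightarrow> real) \<Rightarrow> (real \<Rightarrow> real \<Rightarrow> real) \<Rightarrow> real \<Rightarrow> real \<Rightarrow> real" where
  "markov_prod L1 L2 w1 w2 =
     (LINT t:{0<..}|lborel. deriv (\<lambda>y. L1 w1 y) t * deriv (\<lambda>x. L2 x w2) t)"

end

theory Submission
  imports Defs
begin

text \<open>
  By homogeneity, \<open>\<partial>\<^sub>1\<Lambda>\<^sub>2(t, w) = g(t / w)\<close> wherever \<open>g\<close> is continuous, where \<open>g\<close> is the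
  right derivative of the concave function \<open>\<Lambda>\<^sub>2(\<cdot>, 1)\<close>; \<open>g\<close> is nonincreasing with values in
  \<open>[0, 1]\<close>, hence continuous off a countable set.
  Writing \<open>g(t / w)\<close> as the length of \<open>{r. 0 < r < g(t / w)}\<close> and exchanging the integrals
  turns \<open>(\<Lambda>\<^sub>1 * \<Lambda>\<^sub>2)(s, w)\<close> into \<open>\<integral>\<^sub>0\<^sup>1 \<Lambda>\<^sub>1(s, w \<eta>(r)) dr = w \<integral>\<^sub>0\<^sup>1 \<Lambda>\<^sub>1(s / w, \<eta>(r)) dr\<close>,
  with \<open>\<eta>\<close> the generalised inverse of \<open>g\<close>.
  If \<open>\<Lambda>\<^sub>1(t, 1 - t)\<close> is differentiable, so are the partial maps of
  \<open>\<Lambda>\<^sub>1(x, y) = (x + y) \<Lambda>\<^sub>1(x / (x + y), y / (x + y))\<close>, and since \<open>\<Lambda>\<^sub>1\<close> is 1-Lipschitz the last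
  integral can be differentiated under the integral sign.
  The case of a differentiable \<open>\<Lambda>\<^sub>2(t, 1 - t)\<close> reduces to this one by transposing both factors.
\<close>

lemma scaling_ineq_imp_min_at_endpoints:
  fixes D :: "real \<Rightarrow> real"
  assumes cont: "continuous_on {a..c} D" and a: "0 \<le> a" and b: "b \<in> {a..c}"
    and scaling: "\<And>z r. 0 < z \<Longrightarrow> 1 < r \<Longrightarrow> r * D (z / r) + D (r * z) \<le> (1 + r) * D z"
  shows "min (D a) (D c) \<le> D b"
proof (rule ccontr)
  assume "\<not> ?thesis"
  then have Db: "D b < D a" "D b < D c" by simp_all
  txt \<open>The smallest minimiser \<open>z0\<close> of \<open>D\<close> on \<open>[a, c]\<close> is interior, and the scaling
    inequality turns \<open>z0 / r\<close> into a smaller minimiser once \<open>z0 / r, r z0 \<in> [a, c]\<close>.\<close>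
  obtain zm where zm: "zm \<in> {a..c}" "\<And>y. y \<in> {a..c} \<Longrightarrow> D zm \<le> D y"
    using continuous_attains_inf[OF compact_Icc _ cont] b by auto
  define S where "S = {z \<in> {a..c}. D z = D zm}"
  have S: "S \<noteq> {}" "bdd_below S" using zm(1) by (auto simp: S_def intro!: bdd_belowI[of _ a])
  have "closed S" unfolding S_def by (rule continuous_closed_preimage_constant[OF cont]) simp
  define z0 where "z0 = Inf S"
  have "z0 \<in> S" unfolding z0_def by (rule closed_contains_Inf[OF S \<open>closed S\<close>])
  then have z0: "a \<le> z0" "z0 \<le> c" "D z0 = D zm" by (auto simp: S_def)
  have "D zm < D a" "D zm < D c" using zm(2)[OF b] Db by simp_all
  then have "a < z0" "z0 < c" using z0 by (auto simp: order.order_iff_strict)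
  have z0_pos: "0 < z0" using a \<open>a < z0\<close> by simp
  define h where "h = (a + z0) / 2"
  have h: "0 < h" "a \<le> h" "h < z0" using a \<open>a < z0\<close> by (auto simp: h_def)
  define r where "r = min (c / z0) (z0 / h)"
  have r: "1 < r" using h z0_pos \<open>z0 < c\<close> by (simp add: r_def)
  have "r \<le> c / z0" "r \<le> z0 / h" by (simp_all add: r_def)
  then have "r * z0 \<le> c" "h \<le> z0 / r" using z0_pos h r by (simp_all add: field_simps)
  moreover have "z0 / r < z0" "z0 < r * z0" using z0_pos r by (simp_all add: field_simps)
  ultimately have in_Icc: "z0 / r \<in> {a..c}" "r * z0 \<in> {a..c}"
    unfolding atLeastAtMost_iff using h z0 by linarith+
  have "r * D (z0 / r) \<le> r * D zm"
    using scaling[OF z0_pos r] zm(2)[OF in_Icc(2)] z0(3) by (simp add: algebra_simps)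
  then have "D (z0 / r) \<le> D zm" using r by simp
  then have "z0 / r \<in> S" using zm(2)[OF in_Icc(1)] in_Icc(1) by (auto simp: S_def)
  then have "z0 \<le> z0 / r" unfolding z0_def by (rule cInf_lower[OF _ S(2)])
  then show False using \<open>z0 / r < z0\<close> by simp
qed

lemma concave_on_Ici_if_scaling_ineq:
  fixes f :: "real \<Rightarrow> real"
  assumes cont: "continuous_on {0..} f"
    and scaling: "\<And>z r. 0 < z \<Longrightarrow> 1 < r \<Longrightarrow> r * f (z / r) + f (r * z) \<le> (1 + r) * f z"
  shows "concave_on {0..} f"
proof (rule concave_on_linorderI)
  fix t a c :: real
  assume t: "0 < t" "t < 1" and a: "a \<in> {0..}" and c: "c \<in> {0..}" and ac: "a < c"
  define b where "b = (1 - t) *\<^sub>R a + t *\<^sub>R c"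
  have "0 < t * (c - a)" "0 < (1 - t) * (c - a)" using t ac by simp_all
  then have b: "b \<in> {a..c}" by (simp add: b_def algebra_simps)
  define k where "k = (f c - f a) / (c - a)"
  define D where "D z = f z - (f a + k * (z - a))" for z
  have "min (D a) (D c) \<le> D b"
  proof (rule scaling_ineq_imp_min_at_endpoints[OF _ _ b])
    show "continuous_on {a..c} D"
      unfolding D_def using a by (intro continuous_intros continuous_on_subset[OF cont]) auto
    show "r * D (z / r) + D (r * z) \<le> (1 + r) * D z" if "0 < z" "1 < r" for z r
      using scaling[OF that] that(2) by (simp add: D_def algebra_simps)
  qed (use a in simp)
  moreover have "D a = 0" "D c = 0" using ac by (auto simp: D_def k_def)
  moreover have "f a + k * (b - a) = (1 - t) * f a + t * f c"
    using ac by (simp add: b_def k_def field_simps)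
  ultimately show "(1 - t) * f a + t * f c \<le> f b" by (simp add: D_def)
qed (simp add: convex_real_interval)

lemma differentiable_on_reflect:
  fixes f :: "real \<Rightarrow> real"
  assumes "f differentiable_on {0<..<1}"
  shows "(\<lambda>t. f (1 - t)) differentiable_on {0<..<1}"
proof (rule differentiable_at_imp_differentiable_on)
  fix t :: real assume "t \<in> {0<..<1}"
  with assms have "f differentiable at (1 - t)" by (simp add: differentiable_on_eq_differentiable_at)
  then show "(\<lambda>t. f (1 - t)) differentiable at t" by (rule differentiable_compose) simp
qed

lemma nn_integral_deriv_Ioo:
  fixes f f' :: "real \<Rightarrow> real"
  assumes "a \<le> b" "continuous_on {a..b} f"
    and "\<And>x. x \<in> {a<..<b} \<Longrightarrow> (f has_real_derivative f' x) (at x)"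
    and "\<And>x. x \<in> {a<..<b} \<Longrightarrow> 0 \<le> f' x"
  shows "(\<integral>\<^sup>+ t. ennreal (indicator {a<..<b} t * f' t) \<partial>lborel) = ennreal (f b - f a)"
proof -
  have "(f' has_integral (f b - f a)) {a..b}"
    using assms(1-3)
    by (intro fundamental_theorem_of_calculus_interior)
      (auto simp: has_real_derivative_iff_has_vector_derivative)
  then have "(f' has_integral (f b - f a)) {a<..<b}" by (simp add: has_integral_Icc_iff_Ioo)
  from nn_integral_has_integral_lebesgue[OF _ this] assms(4) show ?thesis by simp
qed

lemma nn_integral_mult_eq_layers:
  fixes A G :: "real \<Rightarrow> real"
  assumes [measurable]: "A \<in> borel_measurable borel" "G \<in> borel_measurable borel"
    and nonneg: "\<And>t. 0 \<le> A t" "\<And>t. 0 \<le> G t"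
  shows "(\<integral>\<^sup>+ t. ennreal (A t * G t) \<partial>lborel)
       = (\<integral>\<^sup>+ r. (\<integral>\<^sup>+ t. ennreal (A t * indicator {0<..<G t} r) \<partial>lborel) \<partial>lborel)"
proof -
  have "ennreal (A t * G t) = (\<integral>\<^sup>+ r. ennreal (A t * indicator {0<..<G t} r) \<partial>lborel)" for t
  proof -
    have "(\<integral>\<^sup>+ r. ennreal (A t * indicator {0<..<G t} r) \<partial>lborel)
        = (\<integral>\<^sup>+ r. ennreal (A t) * indicator {0<..<G t} r \<partial>lborel)"
      by (intro nn_integral_cong) (simp add: indicator_def)
    also have "\<dots> = ennreal (A t * G t)"
      using nonneg[of t] by (simp add: nn_integral_cmult_indicator ennreal_mult)
    finally show ?thesis by simp
  qed
  then have "(\<integral>\<^sup>+ t. ennreal (A t * G t) \<partial>lborel)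
      = (\<integral>\<^sup>+ t. (\<integral>\<^sup>+ r. ennreal (A t * indicator {0<..<G t} r) \<partial>lborel) \<partial>lborel)"
    by simp
  also have "\<dots> = (\<integral>\<^sup>+ r. (\<integral>\<^sup>+ t. ennreal (A t * indicator {0<..<G t} r) \<partial>lborel) \<partial>lborel)"
  proof (rule lborel_pair.Fubini'[symmetric])
    have [measurable]: "Measurable.pred (borel \<Otimes>\<^sub>M borel) (\<lambda>x. snd x \<in> {0<..<G (fst x)})"
      unfolding greaterThanLessThan_iff by measurable
    show "(\<lambda>(t, r). ennreal (A t * indicator {0<..<G t} r)) \<in> borel_measurable (lborel \<Otimes>\<^sub>M lborel)"
      by measurable
  qed
  finally show ?thesis .
qed

lemma tendsto_difference_quotient_sequentially:
  assumes "(f has_real_derivative D) (at x)" "\<And>i. X i \<noteq> x" "X \<longlonglongrightarrow> x"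
  shows "(\<lambda>i. (f (X i) - f x) / (X i - x)) \<longlonglongrightarrow> D"
proof -
  have "((\<lambda>y. (f y - f x) / (y - x)) \<longlongrightarrow> D) (at x)"
    using assms(1) unfolding has_field_derivative_iff .
  with assms(2,3) show ?thesis unfolding tendsto_at_iff_sequentially comp_def by auto
qed

lemma borel_measurable_indicator_deriv:
  fixes f :: "real \<Rightarrow> real"
  assumes cont: "continuous_on {0..} f" and diff: "\<And>t. 0 < t \<Longrightarrow> f differentiable at t"
  shows "(\<lambda>t. indicator {0<..} t * deriv f t) \<in> borel_measurable borel"
proof -
  define g where "g t = f (max 0 t)" for t
  have "continuous_on UNIV g"
    unfolding g_def by (rule continuous_on_compose2[OF cont]) (auto intro: continuous_intros)
  then have [measurable]: "g \<in> borel_measurable borel" by (rule borel_measurable_continuous_onI)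
  define h :: "nat \<Rightarrow> real" where "h n = inverse (real (Suc n))" for n
  show ?thesis
  proof (rule borel_measurable_LIMSEQ_real)
    fix t :: real
    show "(\<lambda>n. indicator {0<..} t * ((g (t + h n) - g t) / (t + h n - t)))
        \<longlonglongrightarrow> indicator {0<..} t * deriv f t"
    proof (cases "0 < t")
      case True
      have "(\<lambda>n. (f (t + h n) - f t) / (t + h n - t)) \<longlonglongrightarrow> deriv f t"
        using diff[OF True] tendsto_add[OF tendsto_const[of t] LIMSEQ_inverse_real_of_nat]
        by (intro tendsto_difference_quotient_sequentially)
          (auto simp: DERIV_deriv_iff_real_differentiable h_def)
      moreover have "g (t + h n) = f (t + h n)" "g t = f t" for n
        using True by (auto simp: g_def h_def max_def)
      ultimately show ?thesis using True by simp
    qed simp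
  qed (simp add: h_def)
qed

lemma borel_measurable_deriv_parametric:
  fixes F :: "real \<Rightarrow> 'a \<Rightarrow> real"
  assumes d: "0 < d"
    and meas: "\<And>x. \<bar>x - x0\<bar> < d \<Longrightarrow> F x \<in> borel_measurable M"
    and diff: "\<And>r. (\<lambda>x. F x r) differentiable at x0"
  shows "(\<lambda>r. deriv (\<lambda>x. F x r) x0) \<in> borel_measurable M"
proof -
  have F0_meas [measurable]: "F x0 \<in> borel_measurable M" using meas d by simp
  define Y :: "nat \<Rightarrow> real" where "Y i = x0 + d * inverse (real (Suc (Suc i)))" for i
  have "Y \<longlonglongrightarrow> x0 + d * 0"
    unfolding Y_def by (intro tendsto_intros LIMSEQ_Suc[OF LIMSEQ_inverse_real_of_nat])
  moreover have "0 < d * inverse (real (Suc (Suc i)))" for i using d by simp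
  moreover have "d * inverse (real (Suc (Suc i))) < d * 1" for i
    using d by (intro mult_strict_left_mono) (auto simp: inverse_less_1_iff)
  ultimately have Y: "Y \<longlonglongrightarrow> x0" "\<And>i. Y i \<noteq> x0" "\<And>i. \<bar>Y i - x0\<bar> < d"
    by (auto simp: Y_def abs_of_pos)
  show ?thesis
  proof (rule borel_measurable_LIMSEQ_real)
    show "(\<lambda>r. (F (Y i) r - F x0 r) / (Y i - x0)) \<in> borel_measurable M" for i
      using meas[OF Y(3)] by measurable
    show "(\<lambda>i. (F (Y i) r - F x0 r) / (Y i - x0)) \<longlonglongrightarrow> deriv (\<lambda>x. F x r) x0" for r
      using diff[of r] Y(1,2)
      by (intro tendsto_difference_quotient_sequentially) (simp_all add: DERIV_deriv_iff_real_differentiable)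
  qed
qed

lemma differentiable_integral_if_lipschitz_dominated:
  fixes F :: "real \<Rightarrow> 'a \<Rightarrow> real"
  assumes d: "0 < d"
    and meas: "\<And>x. \<bar>x - x0\<bar> < d \<Longrightarrow> F x \<in> borel_measurable M"
    and W: "integrable M W"
    and F0: "integrable M (F x0)"
    and bound: "\<And>x r. \<bar>x - x0\<bar> < d \<Longrightarrow> \<bar>F x r - F x0 r\<bar> \<le> \<bar>x - x0\<bar> * W r"
    and diff: "\<And>r. (\<lambda>x. F x r) differentiable at x0"
  shows "(\<lambda>x. integral\<^sup>L M (F x)) differentiable at x0"
proof -
  define D where "D r = deriv (\<lambda>x. F x r) x0" for r
  have D: "((\<lambda>x. F x r) has_real_derivative D r) (at x0)" for r
    using diff[of r] by (simp add: D_def DERIV_deriv_iff_real_differentiable)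
  have F0_meas [measurable]: "F x0 \<in> borel_measurable M" using meas d by simp
  have D_meas: "D \<in> borel_measurable M"
    unfolding D_def by (rule borel_measurable_deriv_parametric[OF d meas diff])
  have integrable: "integrable M (F x)" if "\<bar>x - x0\<bar> < d" for x
  proof -
    have "integrable M (\<lambda>r. F x r - F x0 r)"
    proof (rule Bochner_Integration.integrable_bound)
      show "integrable M (\<lambda>r. \<bar>x - x0\<bar> * W r)" using W by simp
      show "AE r in M. norm (F x r - F x0 r) \<le> norm (\<bar>x - x0\<bar> * W r)"
        using bound[OF that] by (intro AE_I2) (simp add: order.trans[OF _ abs_ge_self])
    qed (use meas[OF that] in measurable)
    from Bochner_Integration.integrable_add[OF F0 this] show ?thesis by simp
  qed
  have "((\<lambda>x. (integral\<^sup>L M (F x) - integral\<^sup>L M (F x0)) / (x - x0)) \<longlongrightarrow> integral\<^sup>L M D)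
      (at x0 within ball x0 d)"
    unfolding tendsto_at_iff_sequentially comp_def
  proof (intro allI impI)
    fix X assume X: "\<forall>i. X i \<in> ball x0 d - {x0}" and lim: "X \<longlonglongrightarrow> x0"
    have Xd: "\<bar>X i - x0\<bar> < d" "X i \<noteq> x0" for i
      using X by (auto simp: dist_real_def abs_minus_commute)
    have "(\<lambda>i. \<integral>r. (F (X i) r - F x0 r) / (X i - x0) \<partial>M) \<longlonglongrightarrow> integral\<^sup>L M D"
    proof (rule integral_dominated_convergence[OF D_meas _ W])
      show "AE r in M. (\<lambda>i. (F (X i) r - F x0 r) / (X i - x0)) \<longlonglongrightarrow> D r"
        using tendsto_difference_quotient_sequentially[OF D Xd(2) lim] by simp
      show "AE r in M. norm ((F (X i) r - F x0 r) / (X i - x0)) \<le> W r" for i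
        using bound[OF Xd(1)] Xd(2)[of i] by (intro AE_I2) (simp add: abs_divide divide_le_eq mult.commute)
    qed (use meas[OF Xd(1)] in measurable)
    moreover have "(\<lambda>i. \<integral>r. (F (X i) r - F x0 r) / (X i - x0) \<partial>M)
        = (\<lambda>i. (integral\<^sup>L M (F (X i)) - integral\<^sup>L M (F x0)) / (X i - x0))"
      using integrable[OF Xd(1)] F0 by (intro ext) simp
    ultimately show "(\<lambda>i. (integral\<^sup>L M (F (X i)) - integral\<^sup>L M (F x0)) / (X i - x0))
        \<longlonglongrightarrow> integral\<^sup>L M D" by simp
  qed
  then have "((\<lambda>x. integral\<^sup>L M (F x)) has_real_derivative integral\<^sup>L M D) (at x0)"
    unfolding has_field_derivative_iff using at_within_open[of x0 "ball x0 d"] d by simp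
  then show ?thesis using real_differentiable_def by blast
qed

lemma has_real_derivative_nonneg_if_mono:
  fixes f :: "real \<Rightarrow> real"
  assumes "(f has_real_derivative D) (at y)" "\<And>z. y < z \<Longrightarrow> f y \<le> f z"
  shows "0 \<le> D"
proof -
  have "(f has_real_derivative D) (at y within {y<..})"
    using assms(1) by (rule has_field_derivative_at_within)
  then have "((\<lambda>z. (f z - f y) / (z - y)) \<longlongrightarrow> D) (at_right y)"
    unfolding has_field_derivative_iff .
  moreover have "\<forall>\<^sub>F z in at_right y. 0 \<le> (f z - f y) / (z - y)"
    unfolding eventually_at_right_field using assms(2) by (intro exI[of _ "y + 1"]) auto
  ultimately show ?thesis by (rule tendsto_lowerbound) simp
qed

section \<open>Right derivative of a concave profile\<close>

locale concave_profile =
  fixes B :: "real \<Rightarrow> real"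
  assumes concave: "concave_on {0..} B"
    and mono: "0 \<le> x \<Longrightarrow> x \<le> y \<Longrightarrow> B x \<le> B y"
    and lipschitz: "0 \<le> x \<Longrightarrow> x \<le> y \<Longrightarrow> B y - B x \<le> y - x"
    and zero: "B 0 = 0"
    and le_1: "0 \<le> x \<Longrightarrow> B x \<le> 1"
begin

text \<open>The value \<open>1\<close> for \<open>v \<le> 0\<close> is a junk value that keeps \<open>right_deriv\<close> antitone on all of \<open>\<real>\<close>.\<close>
definition right_deriv :: "real \<Rightarrow> real" where
  "right_deriv v = (if v \<le> 0 then 1 else Sup ((\<lambda>w. (B w - B v) / (w - v)) ` {v<..}))"

lemma slope_antimono:
  assumes "0 \<le> a" "a < b" "b < c"
  shows "(B c - B b) / (c - b) \<le> (B b - B a) / (b - a)"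
proof -
  have "convex_on {0..} (\<lambda>x. - B x)" using concave by (simp add: concave_on_def)
  from convex_on_slope_le[OF this _ _ assms(2,3)] assms
  have "(B b - B a) / (a - b) \<le> (B c - B a) / (a - c)" "(B c - B a) / (a - c) \<le> (B c - B b) / (b - c)"
    by (simp_all add: minus_diff_eq)
  moreover have "p / (x - y) = - (p / (y - x))" for p x y :: real
    by (metis divide_minus_right minus_diff_eq)
  ultimately show ?thesis by (smt (verit))
qed

lemma slope_bounds:
  assumes "0 \<le> v" "v < w"
  shows "0 \<le> (B w - B v) / (w - v)" "(B w - B v) / (w - v) \<le> 1"
  using mono[of v w] lipschitz[of v w] assms by auto

lemma slope_le_right_deriv: "0 < v \<Longrightarrow> v < w \<Longrightarrow> (B w - B v) / (w - v) \<le> right_deriv v"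
  unfolding right_deriv_def
  by (auto intro!: cSup_upper bdd_aboveI[of _ 1] dest: slope_bounds(2)[rotated])

lemma right_deriv_le_slope:
  assumes "0 \<le> u" "u < v" shows "right_deriv v \<le> (B v - B u) / (v - u)"
  unfolding right_deriv_def using slope_antimono[OF assms] assms by (auto intro!: cSup_least)

lemma right_deriv_nonneg: "0 \<le> right_deriv v"
  using slope_le_right_deriv[of v "v + 1"] slope_bounds(1)[of v "v + 1"]
  by (cases "v \<le> 0") (auto simp: right_deriv_def)

lemma right_deriv_le_1: "right_deriv v \<le> 1"
  unfolding right_deriv_def using slope_bounds(2)[of v] by (auto intro!: cSup_least)

lemma right_deriv_antimono: "x \<le> y \<Longrightarrow> right_deriv y \<le> right_deriv x"
  using right_deriv_le_slope[of x y] slope_le_right_deriv[of x y] right_deriv_le_1[of y]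
  by (cases "x \<le> 0"; cases "x = y") (auto simp: right_deriv_def[of x])

lemma right_deriv_le_inverse:
  assumes "0 < v" shows "right_deriv v \<le> 1 / v"
proof -
  have "right_deriv v \<le> (B v - B 0) / (v - 0)" using right_deriv_le_slope[of 0 v] assms by simp
  also have "\<dots> \<le> 1 / v" using le_1[of v] zero assms by (simp add: divide_right_mono)
  finally show ?thesis .
qed

lemma has_real_derivative_right_deriv:
  assumes v: "0 < v" and cont: "isCont right_deriv v"
  shows "(B has_real_derivative right_deriv v) (at v)"
  unfolding has_field_derivative_iff
proof (subst filterlim_at_split, intro conjI)
  have left: "(right_deriv \<longlongrightarrow> right_deriv v) (at_left v)"
    and right: "(right_deriv \<longlongrightarrow> right_deriv v) (at_right v)"
    using cont unfolding isCont_def filterlim_at_split by auto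
  show "((\<lambda>y. (B y - B v) / (y - v)) \<longlongrightarrow> right_deriv v) (at_right v)"
  proof (rule tendsto_sandwich[OF _ _ right tendsto_const])
    show "\<forall>\<^sub>F y in at_right v. right_deriv y \<le> (B y - B v) / (y - v)"
      unfolding eventually_at_right_field using v by (auto intro!: exI[of _ "v + 1"] right_deriv_le_slope)
    show "\<forall>\<^sub>F y in at_right v. (B y - B v) / (y - v) \<le> right_deriv v"
      unfolding eventually_at_right_field using v by (auto intro!: exI[of _ "v + 1"] slope_le_right_deriv)
  qed
  have swap: "(B y - B v) / (y - v) = (B v - B y) / (v - y)" for y
    by (metis minus_diff_eq minus_divide_divide)
  show "((\<lambda>y. (B y - B v) / (y - v)) \<longlongrightarrow> right_deriv v) (at_left v)"
  proof (rule tendsto_sandwich[OF _ _ tendsto_const left])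
    show "\<forall>\<^sub>F y in at_left v. right_deriv v \<le> (B y - B v) / (y - v)"
      unfolding eventually_at_left_field swap using v by (auto intro!: exI[of _ 0] right_deriv_le_slope)
    show "\<forall>\<^sub>F y in at_left v. (B y - B v) / (y - v) \<le> right_deriv y"
      unfolding eventually_at_left_field swap using v by (auto intro!: exI[of _ 0] slope_le_right_deriv)
  qed
qed

lemma countable_discontinuities_right_deriv: "countable {v \<in> {0<..}. \<not> isCont right_deriv v}"
proof -
  have "mono_on {0<..} (\<lambda>v. - right_deriv v)"
    by (rule mono_onI) (simp add: right_deriv_antimono)
  from mono_on_ctble_discont_open[OF open_greaterThan this]
  have "countable {v \<in> {0<..}. \<not> isCont (\<lambda>v. - right_deriv v) v}" .
  moreover have "isCont (\<lambda>v. - right_deriv v) v \<longleftrightarrow> isCont right_deriv v" for v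
    using isCont_minus[where f="\<lambda>v. - right_deriv v" and a=v] by auto
  ultimately show ?thesis by simp
qed

lemma borel_measurable_right_deriv [measurable]: "right_deriv \<in> borel_measurable borel"
proof -
  have "mono (\<lambda>v. - right_deriv v)" by (rule monoI) (simp add: right_deriv_antimono)
  then have "(\<lambda>v. - (- right_deriv v)) \<in> borel_measurable borel"
    by (intro borel_measurable_uminus borel_measurable_mono)
  then show ?thesis by simp
qed

text \<open>The generalised inverse of the nonincreasing \<open>right_deriv\<close>; the extra \<open>0\<close> keeps the
  supremum meaningful when no \<open>v\<close> qualifies.\<close>
definition right_deriv_inv :: "real \<Rightarrow> real" where
  "right_deriv_inv r = Sup (insert 0 {v. 0 < v \<and> r < right_deriv v})"

lemma bdd_above_right_deriv_gt:
  assumes "0 < r" shows "bdd_above (insert 0 {v. 0 < v \<and> r < right_deriv v})"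
proof (rule bdd_aboveI[of _ "1 / r"])
  fix v assume "v \<in> insert 0 {v. 0 < v \<and> r < right_deriv v}"
  moreover have "v \<le> 1 / r" if "0 < v" "r < right_deriv v"
  proof -
    have "r < 1 / v" using right_deriv_le_inverse[OF that(1)] that(2) by linarith
    then show ?thesis using that(1) assms by (simp add: field_simps)
  qed
  ultimately show "v \<le> 1 / r" using assms by auto
qed

lemma right_deriv_inv_nonneg: "0 < r \<Longrightarrow> 0 \<le> right_deriv_inv r"
  unfolding right_deriv_inv_def by (intro cSup_upper bdd_above_right_deriv_gt) auto

lemma right_deriv_gt_iff:
  assumes r: "0 < r" and v: "0 < v" "v \<noteq> right_deriv_inv r"
  shows "r < right_deriv v \<longleftrightarrow> v < right_deriv_inv r"
proof
  assume "r < right_deriv v"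
  then have "v \<le> right_deriv_inv r"
    unfolding right_deriv_inv_def using v by (intro cSup_upper bdd_above_right_deriv_gt[OF r]) auto
  with v show "v < right_deriv_inv r" by simp
next
  assume "v < right_deriv_inv r"
  then obtain v' where "v' \<in> insert 0 {v. 0 < v \<and> r < right_deriv v}" "v < v'"
    unfolding right_deriv_inv_def using less_cSupE by blast
  then show "r < right_deriv v" using v right_deriv_antimono[of v v'] by auto
qed

lemma right_deriv_inv_antimono:
  assumes "0 < r1" "r1 \<le> r2" shows "right_deriv_inv r2 \<le> right_deriv_inv r1"
  unfolding right_deriv_inv_def using assms
  by (intro cSup_subset_mono bdd_above_right_deriv_gt) auto

lemma borel_measurable_right_deriv_inv:
  fixes h :: "real \<Rightarrow> real"
  assumes "continuous_on UNIV h"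
  shows "(\<lambda>r. indicator {0<..<1} r * h (right_deriv_inv r)) \<in> borel_measurable borel"
proof -
  have "mono_on {0<..<1} (\<lambda>r. - right_deriv_inv r)"
    by (rule mono_onI) (simp add: right_deriv_inv_antimono)
  then have "(\<lambda>r. - right_deriv_inv r) \<in> borel_measurable (restrict_space borel {0<..<1})"
    by (rule borel_measurable_mono_on_fnc)
  moreover have "continuous_on UNIV (\<lambda>y. h (- y))"
    by (rule continuous_on_compose2[OF assms]) (auto intro: continuous_intros)
  ultimately have "(\<lambda>r. h (- (- right_deriv_inv r))) \<in> borel_measurable (restrict_space borel {0<..<1})"
    by (rule borel_measurable_continuous_on[rotated])
  then have "(\<lambda>r. if r \<in> {0<..<1} then h (right_deriv_inv r) else 0) \<in> borel_measurable borel"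
    by (subst measurable_restrict_space_iff[symmetric]) auto
  moreover have "(\<lambda>r. indicator {0<..<1} r * h (right_deriv_inv r))
      = (\<lambda>r. if r \<in> {0<..<1} then h (right_deriv_inv r) else 0)"
    by (rule ext) (simp add: indicator_def)
  ultimately show ?thesis by simp
qed

end

section \<open>Tail dependence functions\<close>

locale tail_dependence =
  fixes L :: "real \<Rightarrow> real \<Rightarrow> real"
  assumes grounded1: "0 \<le> x \<Longrightarrow> L x 0 = 0"
    and grounded2: "0 \<le> y \<Longrightarrow> L 0 y = 0"
    and lipschitz1: "0 \<le> x1 \<Longrightarrow> x1 \<le> x2 \<Longrightarrow> 0 \<le> y \<Longrightarrow> L x2 y - L x1 y \<le> x2 - x1"
    and lipschitz2: "0 \<le> x \<Longrightarrow> 0 \<le> y1 \<Longrightarrow> y1 \<le> y2 \<Longrightarrow> L x y2 - L x y1 \<le> y2 - y1"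
    and two_increasing: "0 \<le> x1 \<Longrightarrow> x1 \<le> x2 \<Longrightarrow> 0 \<le> y1 \<Longrightarrow> y1 \<le> y2 \<Longrightarrow>
      0 \<le> L x2 y2 - L x2 y1 - L x1 y2 + L x1 y1"
    and homogeneous: "0 < c \<Longrightarrow> 0 \<le> x \<Longrightarrow> 0 \<le> y \<Longrightarrow> L (c * x) (c * y) = c * L x y"

lemma copula2_transpose: "copula2 C \<Longrightarrow> copula2 (\<lambda>u v. C v u)"
  unfolding copula2_def by (smt (verit))

lemma copula2_lipschitz1:
  assumes "copula2 C" "0 \<le> u1" "u1 \<le> u2" "u2 \<le> 1" "v \<in> {0..1}"
  shows "C u2 v - C u1 v \<le> u2 - u1"
proof -
  note C = assms(1)[unfolded copula2_def]
  have "0 \<le> C u2 1 - C u2 v - C u1 1 + C u1 v"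
    using C[THEN conjunct2, rule_format, of u1 u2 v 1] assms(2-5) by auto
  moreover have "C u1 1 = u1" "C u2 1 = u2"
    using C[THEN conjunct1, rule_format, of u1] C[THEN conjunct1, rule_format, of u2] assms(2-4) by auto
  ultimately show ?thesis by linarith
qed

lemma M2_transpose:
  assumes "L \<in> M2" shows "(\<lambda>x y. L y x) \<in> M2"
proof -
  obtain C where "copula2 C"
    and "\<forall>w1\<ge>0. \<forall>w2\<ge>0. ((\<lambda>s. C (s * w1) (s * w2) / s) \<longlongrightarrow> L w1 w2) (at_right 0)"
    using assms unfolding M2_def by blast
  then show ?thesis
    unfolding M2_def by (intro CollectI exI[of _ "\<lambda>u v. C v u"]) (simp add: copula2_transpose)
qed

lemma eventually_at_right_scaled_le_1:
  "\<forall>\<^sub>F s in at_right 0. 0 < s \<and> s * (x::real) \<le> 1 \<and> s * (y::real) \<le> 1"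
proof -
  define M where "M = \<bar>x\<bar> + \<bar>y\<bar> + 1"
  have "s * x \<le> 1 \<and> s * y \<le> 1" if "0 < s" "s < 1 / M" for s
  proof -
    have "s * x \<le> s * M" "s * y \<le> s * M" using that by (auto simp: M_def intro!: mult_left_mono)
    moreover have "s * M \<le> 1" using that by (simp add: M_def field_simps)
    ultimately show ?thesis by linarith
  qed
  moreover have "0 < M" by (simp add: M_def add_pos_nonneg)
  ultimately show ?thesis unfolding eventually_at_right_field by (intro exI[of _ "1 / M"]) auto
qed

lemma M2_grounded1:
  assumes "L \<in> M2" "0 \<le> x" shows "L x 0 = 0"
proof -
  obtain C where C: "copula2 C"
    and "\<forall>w1\<ge>0. \<forall>w2\<ge>0. ((\<lambda>s. C (s * w1) (s * w2) / s) \<longlongrightarrow> L w1 w2) (at_right 0)"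
    using assms unfolding M2_def by blast
  then have lim: "((\<lambda>s. C (s * x) (s * 0) / s) \<longlongrightarrow> L x 0) (at_right 0)"
    using assms(2) by blast
  have "\<forall>\<^sub>F s in at_right 0. C (s * x) (s * 0) / s = 0"
    using eventually_at_right_scaled_le_1[of x 0]
    by eventually_elim (use C assms(2) in \<open>simp add: copula2_def\<close>)
  then have "((\<lambda>s. C (s * x) (s * 0) / s) \<longlongrightarrow> 0) (at_right 0)"
    by (rule tendsto_eventually)
  with lim show ?thesis using tendsto_unique[OF trivial_limit_at_right_real] by blast
qed

lemma M2_lipschitz1:
  assumes "L \<in> M2" "0 \<le> x1" "x1 \<le> x2" "0 \<le> y"
  shows "L x2 y - L x1 y \<le> x2 - x1"
proof -
  obtain C where C: "copula2 C" and lim: "\<And>x. 0 \<le> x \<Longrightarrow>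
      ((\<lambda>s. C (s * x) (s * y) / s) \<longlongrightarrow> L x y) (at_right 0)"
    using assms unfolding M2_def by auto
  have "((\<lambda>s. C (s * x2) (s * y) / s - C (s * x1) (s * y) / s) \<longlongrightarrow> L x2 y - L x1 y) (at_right 0)"
    using assms by (intro tendsto_diff lim) auto
  moreover have "\<forall>\<^sub>F s in at_right 0. C (s * x2) (s * y) / s - C (s * x1) (s * y) / s \<le> x2 - x1"
    using eventually_at_right_scaled_le_1[of x2 y]
  proof eventually_elim
    case (elim s)
    with assms have "C (s * x2) (s * y) - C (s * x1) (s * y) \<le> s * x2 - s * x1"
      by (intro copula2_lipschitz1[OF C]) (auto simp: mult_left_mono mult_nonneg_nonneg)
    with elim show ?case
      by (simp add: diff_divide_distrib[symmetric] pos_divide_le_eq right_diff_distrib mult.commute)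
  qed
  ultimately show ?thesis by (rule tendsto_upperbound) simp
qed

lemma M2_two_increasing:
  assumes "L \<in> M2" "0 \<le> x1" "x1 \<le> x2" "0 \<le> y1" "y1 \<le> y2"
  shows "0 \<le> L x2 y2 - L x2 y1 - L x1 y2 + L x1 y1"
proof -
  obtain C where C: "copula2 C" and lim: "\<And>x y. 0 \<le> x \<Longrightarrow> 0 \<le> y \<Longrightarrow>
      ((\<lambda>s. C (s * x) (s * y) / s) \<longlongrightarrow> L x y) (at_right 0)"
    using assms unfolding M2_def by auto
  have "((\<lambda>s. C (s * x2) (s * y2) / s - C (s * x2) (s * y1) / s - C (s * x1) (s * y2) / s
      + C (s * x1) (s * y1) / s) \<longlongrightarrow> L x2 y2 - L x2 y1 - L x1 y2 + L x1 y1) (at_right 0)"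
    using assms by (intro tendsto_diff tendsto_add lim) auto
  moreover have "\<forall>\<^sub>F s in at_right 0. 0 \<le> C (s * x2) (s * y2) / s - C (s * x2) (s * y1) / s
      - C (s * x1) (s * y2) / s + C (s * x1) (s * y1) / s"
    using eventually_at_right_scaled_le_1[of x2 y2]
  proof eventually_elim
    case (elim s)
    with assms have "0 \<le> C (s * x2) (s * y2) - C (s * x2) (s * y1) - C (s * x1) (s * y2) + C (s * x1) (s * y1)"
      using C[unfolded copula2_def, THEN conjunct2, rule_format, of "s * x1" "s * x2" "s * y1" "s * y2"]
      by (auto simp: mult_left_mono)
    with elim show ?case by (simp add: diff_divide_distrib[symmetric] add_divide_distrib[symmetric])
  qed
  ultimately show ?thesis by (rule tendsto_lowerbound) simp
qed

lemma M2_homogeneous: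
  assumes "L \<in> M2" "0 < c" "0 \<le> x" "0 \<le> y"
  shows "L (c * x) (c * y) = c * L x y"
proof -
  obtain C where lim: "\<And>x y. 0 \<le> x \<Longrightarrow> 0 \<le> y \<Longrightarrow>
      ((\<lambda>s. C (s * x) (s * y) / s) \<longlongrightarrow> L x y) (at_right 0)"
    using assms unfolding M2_def by auto
  have "filterlim (\<lambda>s. c * s) (at_right 0) (at_right 0)"
    using assms(2) by (simp add: filterlim_def filtermap_times_pos_at_right)
  from filterlim_compose[OF lim[OF assms(3,4)] this]
  have "((\<lambda>s. c * (C ((c * s) * x) ((c * s) * y) / (c * s))) \<longlongrightarrow> c * L x y) (at_right 0)"
    by (intro tendsto_mult_left)
  moreover have "c * (C ((c * s) * x) ((c * s) * y) / (c * s)) = C (s * (c * x)) (s * (c * y)) / s" for s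
    using assms(2) by (simp add: ac_simps)
  ultimately have "((\<lambda>s. C (s * (c * x)) (s * (c * y)) / s) \<longlongrightarrow> c * L x y) (at_right 0)"
    by simp
  with lim[of "c * x" "c * y"] assms show ?thesis
    using tendsto_unique[OF trivial_limit_at_right_real] by auto
qed

lemma M2_imp_tail_dependence:
  assumes "L \<in> M2" shows "tail_dependence L"
proof
  note LT = M2_transpose[OF assms]
  show "L x 0 = 0" if "0 \<le> x" for x using M2_grounded1[OF assms that] .
  show "L 0 y = 0" if "0 \<le> y" for y using M2_grounded1[OF LT that] .
  show "L x2 y - L x1 y \<le> x2 - x1" if "0 \<le> x1" "x1 \<le> x2" "0 \<le> y" for x1 x2 y
    using M2_lipschitz1[OF assms that] .
  show "L x y2 - L x y1 \<le> y2 - y1" if "0 \<le> x" "0 \<le> y1" "y1 \<le> y2" for x y1 y2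
    using M2_lipschitz1[OF LT that(2,3,1)] .
  show "0 \<le> L x2 y2 - L x2 y1 - L x1 y2 + L x1 y1"
    if "0 \<le> x1" "x1 \<le> x2" "0 \<le> y1" "y1 \<le> y2" for x1 x2 y1 y2
    using M2_two_increasing[OF assms that] .
  show "L (c * x) (c * y) = c * L x y" if "0 < c" "0 \<le> x" "0 \<le> y" for c x y
    using M2_homogeneous[OF assms that] .
qed

lemma hat_transpose: "hat (\<lambda>x y. L y x) = (\<lambda>t. hat L (1 - t))"
  by (simp add: hat_def fun_eq_iff)

context tail_dependence
begin

lemma transpose: "tail_dependence (\<lambda>x y. L y x)"
proof
  show "0 \<le> L y2 x2 - L y1 x2 - L y2 x1 + L y1 x1"
    if "0 \<le> x1" "x1 \<le> x2" "0 \<le> y1" "y1 \<le> y2" for x1 x2 y1 y2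
    using two_increasing[OF that(3,4,1,2)] by linarith
qed (rule grounded2 grounded1 lipschitz2 lipschitz1 homogeneous; assumption)+

lemma mono1: "0 \<le> x1 \<Longrightarrow> x1 \<le> x2 \<Longrightarrow> 0 \<le> y \<Longrightarrow> L x1 y \<le> L x2 y"
  using two_increasing[of x1 x2 0 y] grounded1[of x1] grounded1[of x2] by simp

lemma mono2: "0 \<le> x \<Longrightarrow> 0 \<le> y1 \<Longrightarrow> y1 \<le> y2 \<Longrightarrow> L x y1 \<le> L x y2"
  using two_increasing[of 0 x y1 y2] grounded2[of y1] grounded2[of y2] by simp

lemma nonneg: "0 \<le> x \<Longrightarrow> 0 \<le> y \<Longrightarrow> 0 \<le> L x y"
  using mono2[of x 0 y] grounded1[of x] by simp

lemma lipschitz_on_first: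
  assumes "0 \<le> y" shows "1-lipschitz_on {0..} (\<lambda>x. L x y)"
proof (rule lipschitz_onI)
  fix x1 x2 :: real assume "x1 \<in> {0..}" "x2 \<in> {0..}"
  with assms show "dist (L x1 y) (L x2 y) \<le> 1 * dist x1 x2"
    using lipschitz1[of x1 x2 y] lipschitz1[of x2 x1 y] mono1[of x1 x2 y] mono1[of x2 x1 y]
    by (cases "x1 \<le> x2") (auto simp: dist_real_def)
qed simp

lemma lipschitz_on_second: "0 \<le> x \<Longrightarrow> 1-lipschitz_on {0..} (L x)"
  using tail_dependence.lipschitz_on_first[OF transpose] by simp

lemma concave_first: "0 \<le> y \<Longrightarrow> concave_on {0..} (\<lambda>x. L x y)"
proof (rule concave_on_Ici_if_scaling_ineq)
  assume y: "0 \<le> y"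
  show "continuous_on {0..} (\<lambda>x. L x y)" by (rule lipschitz_on_continuous_on[OF lipschitz_on_first[OF y]])
  fix z r :: real assume z: "0 < z" and r: "1 < r"
  have "z \<le> r * z" "y \<le> r * y" using mult_right_mono[of 1 r z] mult_right_mono[of 1 r y] z y r by simp_all
  then have "0 \<le> L (r * z) (r * y) - L (r * z) y - L z (r * y) + L z y"
    using z y by (intro two_increasing) auto
  moreover have "L (r * z) (r * y) = r * L z y" "L z (r * y) = r * L (z / r) y"
    using homogeneous[of r z y] homogeneous[of r "z / r" y] z y r by auto
  ultimately show "r * L (z / r) y + L (r * z) y \<le> (1 + r) * L z y" by (simp add: algebra_simps)
qed

lemma eq_hat:
  assumes "0 < x" "0 < y" shows "L x y = (x + y) * hat L (x / (x + y))"
proof -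
  have "(x + y) * (x / (x + y)) = x" "(x + y) * (y / (x + y)) = y" "1 - x / (x + y) = y / (x + y)"
    using assms by (simp_all add: field_simps)
  then show ?thesis
    using homogeneous[of "x + y" "x / (x + y)" "y / (x + y)"] assms by (simp add: hat_def)
qed

lemma differentiable_first:
  assumes hat: "hat L differentiable_on {0<..<1}" and x: "0 < x" and y: "0 \<le> y"
  shows "(\<lambda>x. L x y) differentiable at x"
proof (cases "y = 0")
  case True
  have "(\<lambda>_. 0::real) differentiable at x" by simp
  then show ?thesis
  proof (rule differentiable_transform_within[OF _ x UNIV_I])
    fix x' assume "dist x' x < x"
    then have "0 \<le> x'" by (simp add: dist_real_def abs_less_iff)
    then show "0 = L x' y" using True by (simp add: grounded1)
  qed
next
  case False
  then have y: "0 < y" using y by simp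
  have "hat L differentiable at (x / (x + y))"
    using hat x y by (simp add: differentiable_on_eq_differentiable_at)
  moreover have "(\<lambda>x. x / (x + y)) differentiable at x" using x y by simp
  ultimately have "(\<lambda>x. hat L (x / (x + y))) differentiable at x" by (rule differentiable_compose)
  then have "(\<lambda>x. (x + y) * hat L (x / (x + y))) differentiable at x" by (intro differentiable_mult) simp_all
  then show ?thesis
  proof (rule differentiable_transform_within[OF _ x UNIV_I])
    fix x' assume "dist x' x < x"
    then have "0 < x'" by (simp add: dist_real_def abs_less_iff)
    then show "(x' + y) * hat L (x' / (x' + y)) = L x' y" using y by (simp add: eq_hat)
  qed
qed

lemma differentiable_second:
  assumes "hat L differentiable_on {0<..<1}" "0 \<le> x" "0 < y"
  shows "L x differentiable at y"
proof -
  have "hat (\<lambda>x y. L y x) differentiable_on {0<..<1}"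
    unfolding hat_transpose[of L] by (rule differentiable_on_reflect[OF assms(1)])
  from tail_dependence.differentiable_first[OF transpose this assms(3,2)] show ?thesis by simp
qed

sublocale profile: concave_profile "\<lambda>x. L x 1"
proof
  show "concave_on {0..} (\<lambda>x. L x 1)" by (rule concave_first) simp
  show "L x 1 \<le> 1" if "0 \<le> x" for x using lipschitz2[of x 0 1] grounded1[of x] that by simp
qed (simp_all add: mono1 lipschitz1 grounded2)

lemma has_real_derivative_first_right_deriv:
  assumes w: "0 < w" and t: "0 < t" and cont: "isCont profile.right_deriv (t / w)"
  shows "((\<lambda>x. L x w) has_real_derivative profile.right_deriv (t / w)) (at t)"
proof -
  have "((\<lambda>x. L x 1) has_real_derivative profile.right_deriv (t / w)) (at (t / w))"
    using t w cont by (intro profile.has_real_derivative_right_deriv) simp_all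
  from DERIV_cmult[OF DERIV_chain2[OF this DERIV_cdivide[OF DERIV_ident, of w]], of w]
  have "((\<lambda>x. w * L (x / w) 1) has_real_derivative profile.right_deriv (t / w)) (at t)"
    using w by simp
  then show ?thesis
  proof (rule has_field_derivative_transform_within_open[OF _ open_greaterThan[of 0]])
    show "w * L (x / w) 1 = L x w" if "x \<in> {0<..}" for x
      using homogeneous[of w "x / w" 1] w that by simp
  qed (use t in simp)
qed

end

section \<open>The Markov product\<close>

locale hat_differentiable_pair = L1: tail_dependence L1 + L2: tail_dependence L2
  for L1 L2 :: "real \<Rightarrow> real \<Rightarrow> real" +
  assumes hat_differentiable: "hat L1 differentiable_on {0<..<1}"
begin

lemma has_real_derivative_deriv_second:
  assumes "0 \<le> s" "0 < t"
  shows "(L1 s has_real_derivative deriv (L1 s) t) (at t)"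
  using L1.differentiable_second[OF hat_differentiable assms]
  by (simp add: DERIV_deriv_iff_real_differentiable)

lemma deriv_second_nonneg: "0 \<le> s \<Longrightarrow> 0 < t \<Longrightarrow> 0 \<le> deriv (L1 s) t"
  by (rule has_real_derivative_nonneg_if_mono[OF has_real_derivative_deriv_second])
    (auto intro: L1.mono2)

lemma markov_prod_eq_integral_right_deriv:
  assumes w: "0 < w"
  shows "markov_prod L1 L2 s w
    = (\<integral>t. indicator {0<..} t * deriv (L1 s) t * L2.profile.right_deriv (t / w) \<partial>lborel)"
  unfolding markov_prod_def set_lebesgue_integral_def
proof (rule integral_discrete_difference)
  let ?X = "(\<lambda>v. w * v) ` {v \<in> {0<..}. \<not> isCont L2.profile.right_deriv v}"
  show "countable ?X" using L2.profile.countable_discontinuities_right_deriv by simp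
  fix t assume "t \<notin> ?X"
  then have "isCont L2.profile.right_deriv (t / w)" if "0 < t"
    using w that image_eqI[of t "\<lambda>v. w * v" "t / w" "{v \<in> {0<..}. \<not> isCont L2.profile.right_deriv v}"]
    by auto
  then show "indicator {0<..} t *\<^sub>R (deriv (L1 s) t * deriv (\<lambda>x. L2 x w) t)
      = indicator {0<..} t * deriv (L1 s) t * L2.profile.right_deriv (t / w)"
    using DERIV_imp_deriv[OF L2.has_real_derivative_first_right_deriv[OF w]]
    by (cases "0 < t") auto
qed auto

lemma nn_integral_layer_eq:
  assumes s: "0 \<le> s" and w: "0 < w"
  shows "(\<integral>\<^sup>+ t. ennreal (indicator {0<..} t * deriv (L1 s) t
        * indicator {0<..<L2.profile.right_deriv (t / w)} r) \<partial>lborel)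
      = ennreal (indicator {0<..<1} r * L1 s (w * L2.profile.right_deriv_inv r))"
proof (cases "0 < r \<and> r < 1")
  case False
  then have "indicator {0<..<L2.profile.right_deriv (t / w)} r = (0::real)" for t
    using L2.profile.right_deriv_le_1[of "t / w"] by (auto simp: indicator_def)
  with False show ?thesis by simp
next
  case True
  define c where "c = w * L2.profile.right_deriv_inv r"
  have c: "0 \<le> c" using True w L2.profile.right_deriv_inv_nonneg[of r] by (simp add: c_def)
  have "AE t in lborel. ennreal (indicator {0<..} t * deriv (L1 s) t
        * indicator {0<..<L2.profile.right_deriv (t / w)} r)
      = ennreal (indicator {0<..<c} t * deriv (L1 s) t)"
    using AE_lborel_singleton[of c]
  proof eventually_elim
    case (elim t)
    show ?case
    proof (cases "0 < t")
      case t: True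
      have "t / w \<noteq> L2.profile.right_deriv_inv r" using elim w by (auto simp: c_def field_simps)
      then have "r < L2.profile.right_deriv (t / w) \<longleftrightarrow> t / w < L2.profile.right_deriv_inv r"
        using True t w by (intro L2.profile.right_deriv_gt_iff) auto
      also have "\<dots> \<longleftrightarrow> t < c" using w by (simp add: c_def divide_less_eq mult.commute)
      finally show ?thesis using True t by (simp add: indicator_def)
    qed simp
  qed
  then have "(\<integral>\<^sup>+ t. ennreal (indicator {0<..} t * deriv (L1 s) t
        * indicator {0<..<L2.profile.right_deriv (t / w)} r) \<partial>lborel)
      = (\<integral>\<^sup>+ t. ennreal (indicator {0<..<c} t * deriv (L1 s) t) \<partial>lborel)"
    by (rule nn_integral_cong_AE)
  also have "\<dots> = ennreal (L1 s c - L1 s 0)"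
  proof (rule nn_integral_deriv_Ioo[OF c])
    show "continuous_on {0..c} (L1 s)"
      using lipschitz_on_continuous_on[OF L1.lipschitz_on_second[OF s]] by (rule continuous_on_subset) auto
  qed (auto intro: has_real_derivative_deriv_second deriv_second_nonneg s)
  finally show ?thesis using True s by (simp add: c_def L1.grounded1)
qed

lemma borel_measurable_integrand:
  assumes x: "0 \<le> x" and w: "0 \<le> w"
  shows "(\<lambda>r. indicator {0<..<1} r * L1 x (w * L2.profile.right_deriv_inv r)) \<in> borel_measurable borel"
proof -
  have "continuous_on UNIV (\<lambda>y. L1 x (w * max 0 y))"
    using w by (intro continuous_on_compose2[OF lipschitz_on_continuous_on[OF L1.lipschitz_on_second[OF x]]])
      (auto intro!: continuous_intros)
  from L2.profile.borel_measurable_right_deriv_inv[OF this]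
  have "(\<lambda>r. indicator {0<..<1} r * L1 x (w * max 0 (L2.profile.right_deriv_inv r))) \<in> borel_measurable borel" .
  moreover have "(\<lambda>r. indicator {0<..<1} r * L1 x (w * max 0 (L2.profile.right_deriv_inv r)))
      = (\<lambda>r. indicator {0<..<1} r * L1 x (w * L2.profile.right_deriv_inv r))"
    using L2.profile.right_deriv_inv_nonneg by (auto simp: indicator_def fun_eq_iff)
  ultimately show ?thesis by simp
qed

lemma markov_prod_eq_integral_right_deriv_inv:
  assumes s: "0 \<le> s" and w: "0 < w"
  shows "markov_prod L1 L2 s w
    = (\<integral>r. indicator {0<..<1} r * L1 s (w * L2.profile.right_deriv_inv r) \<partial>lborel)"
proof -
  let ?A = "\<lambda>t. indicator {0<..} t * deriv (L1 s) t"
  let ?G = "\<lambda>t. L2.profile.right_deriv (t / w)"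
  let ?H = "\<lambda>r. indicator {0<..<1} r * L1 s (w * L2.profile.right_deriv_inv r)"
  have cont: "continuous_on {0..} (L1 s)"
    by (rule lipschitz_on_continuous_on[OF L1.lipschitz_on_second[OF s]])
  have [measurable]: "?A \<in> borel_measurable borel"
    using L1.differentiable_second[OF hat_differentiable s]
    by (intro borel_measurable_indicator_deriv[OF cont])
  have A_nonneg: "0 \<le> ?A t" for t using deriv_second_nonneg[OF s, of t] by (simp add: indicator_def)
  have G_nonneg: "0 \<le> ?G t" for t by (rule L2.profile.right_deriv_nonneg)
  have [measurable]: "?H \<in> borel_measurable borel"
    using w by (intro borel_measurable_integrand[OF s]) simp
  have H_nonneg: "0 \<le> ?H r" for r
    using L1.nonneg[OF s] L2.profile.right_deriv_inv_nonneg[of r] w by (simp add: indicator_def)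
  have "markov_prod L1 L2 s w = (\<integral>t. ?A t * ?G t \<partial>lborel)"
    using markov_prod_eq_integral_right_deriv[OF w] by simp
  also have "\<dots> = enn2real (\<integral>\<^sup>+ t. ennreal (?A t * ?G t) \<partial>lborel)"
    using A_nonneg G_nonneg by (intro integral_eq_nn_integral) auto
  also have "(\<integral>\<^sup>+ t. ennreal (?A t * ?G t) \<partial>lborel)
      = (\<integral>\<^sup>+ r. (\<integral>\<^sup>+ t. ennreal (?A t * indicator {0<..<?G t} r) \<partial>lborel) \<partial>lborel)"
    using A_nonneg G_nonneg by (intro nn_integral_mult_eq_layers) auto
  also have "\<dots> = (\<integral>\<^sup>+ r. ennreal (?H r) \<partial>lborel)"
    using nn_integral_layer_eq[OF s w] by simp
  also have "enn2real \<dots> = (\<integral>r. ?H r \<partial>lborel)"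
    using H_nonneg by (intro integral_eq_nn_integral[symmetric]) auto
  finally show ?thesis .
qed

lemma hat_markov_prod_eq:
  assumes s: "0 < s" "s < 1"
  shows "hat (markov_prod L1 L2) s
    = (1 - s) * (\<integral>r. indicator {0<..<1} r * L1 (s / (1 - s)) (L2.profile.right_deriv_inv r) \<partial>lborel)"
proof -
  have eq: "indicator {0<..<1} r * L1 s ((1 - s) * L2.profile.right_deriv_inv r)
      = (1 - s) * (indicator {0<..<1} r * L1 (s / (1 - s)) (L2.profile.right_deriv_inv r))" for r
  proof (cases "r \<in> {0<..<1}")
    case True
    then show ?thesis
      using L1.homogeneous[of "1 - s" "s / (1 - s)" "L2.profile.right_deriv_inv r"]
        L2.profile.right_deriv_inv_nonneg[of r] s by simp
  qed simp
  have "hat (markov_prod L1 L2) s = markov_prod L1 L2 s (1 - s)" by (simp add: hat_def)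
  also have "\<dots> = (\<integral>r. indicator {0<..<1} r * L1 s ((1 - s) * L2.profile.right_deriv_inv r) \<partial>lborel)"
    using s by (intro markov_prod_eq_integral_right_deriv_inv) auto
  also have "\<dots> = (1 - s) * (\<integral>r. indicator {0<..<1} r * L1 (s / (1 - s)) (L2.profile.right_deriv_inv r) \<partial>lborel)"
    unfolding eq by (rule integral_mult_right_zero)
  finally show ?thesis .
qed

lemma differentiable_integral_right_deriv_inv:
  assumes x0: "0 < x0"
  shows "(\<lambda>x. \<integral>r. indicator {0<..<1} r * L1 x (L2.profile.right_deriv_inv r) \<partial>lborel)
    differentiable at x0"
proof -
  let ?\<eta> = "L2.profile.right_deriv_inv"
  have \<eta>: "0 \<le> ?\<eta> r" if "r \<in> {0<..<1}" for r
    using that L2.profile.right_deriv_inv_nonneg by simp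
  have meas: "(\<lambda>r. indicator {0<..<1} r * L1 x (?\<eta> r)) \<in> borel_measurable lborel" if "0 \<le> x" for x
    using borel_measurable_integrand[OF that, of 1] by simp
  have bound: "\<bar>indicator {0<..<1} r * L1 x (?\<eta> r) - indicator {0<..<1} r * L1 x0 (?\<eta> r)\<bar>
      \<le> \<bar>x - x0\<bar> * indicator {0<..<1} r" if x: "0 \<le> x" for x r
  proof (cases "r \<in> {0<..<1}")
    case True
    then show ?thesis
      using lipschitz_onD[OF L1.lipschitz_on_first[OF \<eta>[OF True]], of x x0] x x0
      by (simp add: dist_real_def)
  qed simp
  have W: "integrable lborel (indicator {0<..<1} :: real \<Rightarrow> real)"
    by (rule integrable_real_indicator) auto
  have integrable: "integrable lborel (\<lambda>r. indicator {0<..<1} r * L1 x0 (?\<eta> r))"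
  proof (rule Bochner_Integration.integrable_bound)
    show "integrable lborel (\<lambda>r::real. x0 * indicator {0<..<1} r :: real)"
      by (rule integrable_mult_right) (rule W)
    have "L1 x0 y \<le> x0" if "0 \<le> y" for y
      using L1.lipschitz1[of 0 x0 y] L1.grounded2[of y] x0 that by simp
    then show "AE r in lborel. norm (indicator {0<..<1} r * L1 x0 (?\<eta> r)) \<le> norm (x0 * indicator {0<..<1} r :: real)"
      using L1.nonneg[of x0] x0 \<eta> by (intro AE_I2) (auto simp: indicator_def)
  qed (use meas x0 in simp)
  show ?thesis
  proof (rule differentiable_integral_if_lipschitz_dominated[OF x0 meas W integrable bound])
    show "(\<lambda>x. indicator {0<..<1} r * L1 x (?\<eta> r)) differentiable at x0" for r
      using L1.differentiable_first[OF hat_differentiable x0 \<eta>[of r]]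
      by (cases "r \<in> {0<..<1}") auto
  qed (simp_all add: abs_less_iff)
qed

theorem hat_markov_prod_differentiable: "hat (markov_prod L1 L2) differentiable_on {0<..<1}"
proof (rule differentiable_at_imp_differentiable_on)
  fix s :: real assume "s \<in> {0<..<1}"
  then have s: "0 < s" "s < 1" by auto
  define R where "R x = (\<integral>r. indicator {0<..<1} r * L1 x (L2.profile.right_deriv_inv r) \<partial>lborel)" for x
  have "R differentiable at (s / (1 - s))"
    unfolding R_def using s by (intro differentiable_integral_right_deriv_inv) simp
  moreover have "(\<lambda>s. s / (1 - s)) differentiable at s" using s by simp
  ultimately have "(\<lambda>s. R (s / (1 - s))) differentiable at s" by (rule differentiable_compose)
  then have "(\<lambda>s. (1 - s) * R (s / (1 - s))) differentiable at s" by (intro differentiable_mult) simp_all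
  then show "hat (markov_prod L1 L2) differentiable at s"
  proof (rule differentiable_transform_within[OF _ _ UNIV_I])
    show "0 < min s (1 - s)" using s by simp
    fix s' assume "dist s' s < min s (1 - s)"
    then have "0 < s'" "s' < 1" by (auto simp: dist_real_def abs_less_iff)
    then show "(1 - s') * R (s' / (1 - s')) = hat (markov_prod L1 L2) s'"
      by (simp add: R_def hat_markov_prod_eq)
  qed
qed

end

lemma markov_prod_transpose: "markov_prod L1 L2 x y = markov_prod (\<lambda>x y. L2 y x) (\<lambda>x y. L1 y x) y x"
  by (simp add: markov_prod_def mult.commute)

theorem mainTheorem8:
  assumes "L1 \<in> M2" and "L2 \<in> M2"
    and "hat L1 differentiable_on {0<..<1} \<or> hat L2 differentiable_on {0<..<1}"
  shows "hat (markov_prod L1 L2) differentiable_on {0<..<1}"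
proof -
  interpret L1: tail_dependence L1 by (rule M2_imp_tail_dependence[OF assms(1)])
  interpret L2: tail_dependence L2 by (rule M2_imp_tail_dependence[OF assms(2)])
  show ?thesis
  proof (cases "hat L1 differentiable_on {0<..<1}")
    case True
    interpret hat_differentiable_pair L1 L2 by unfold_locales (fact True)
    show ?thesis by (rule hat_markov_prod_differentiable)
  next
    case False
    with assms(3) have "hat (\<lambda>x y. L2 y x) differentiable_on {0<..<1}"
      unfolding hat_transpose[of L2] by (simp add: differentiable_on_reflect)
    with L2.transpose L1.transpose interpret T: hat_differentiable_pair "\<lambda>x y. L2 y x" "\<lambda>x y. L1 y x"
      by (simp add: hat_differentiable_pair_def hat_differentiable_pair_axioms_def)
    have "hat (markov_prod L1 L2) = (\<lambda>t. hat (markov_prod (\<lambda>x y. L2 y x) (\<lambda>x y. L1 y x)) (1 - t))"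
      by (simp add: hat_def fun_eq_iff markov_prod_transpose[of L1 L2])
    with differentiable_on_reflect[OF T.hat_markov_prod_differentiable] show ?thesis by simp
  qed
qed

end
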